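(* Let $G$ be a finite graph, $k$ a positive integer, $c$ a $k$-colouring of $G$, and $u,v\in V(G)$ with $|C_{c,u}|\ge 2$ and $|C_{c,v}|\ge 2$. Let $c_u\in C_{c,u}$ and $c_v\in C_{c,v}$. If $uv\notin E(G)$, then $|C_{c_u,v}|\ge 2$ and $|C_{c_v,u}|\ge 2$.
   Context: A $k$-colouring of $G$ is a map $c:V(G)\to\{1,\dots,k\}$ with $c(x)\neq c(y)$ for every edge $xy$. For a $k$-colouring $c$ and $u\in V(G)$, $C_{c,u}$ denotes the set of $k$-colourings of $G$ that differ from $c$ exactly at the vertex $u$. *)

theory Defs
  imports Main "HOL-Library.FuncSet"
begin

definition fin_graph :: "'a set \<Rightarrow> ('a \<Rightarrow> 'a \<Rightarrow> bool) \<Rightarrow> bool" where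
  "fin_graph V E \<longleftrightarrow> finite V \<and> (\<forall>x y. E x y \<longrightarrow> x \<in> V \<and> y \<in> V)
     \<and> (\<forall>x y. E x y \<longrightarrow> E y x) \<and> (\<forall>x. \<not> E x x)"

definition colouring :: "'a set \<Rightarrow> ('a \<Rightarrow> 'a \<Rightarrow> bool) \<Rightarrow> nat \<Rightarrow> ('a \<Rightarrow> nat) \<Rightarrow> bool" where
  "colouring V E k c \<longleftrightarrow> c \<in> V \<rightarrow>\<^sub>E {1..k} \<and> (\<forall>x y. E x y \<longrightarrow> c x \<noteq> c y)"

text \<open>C_{c,u}: the k-colourings differing from c exactly at u.\<close>
definition recol :: "'a set \<Rightarrow> ('a \<Rightarrow> 'a \<Rightarrow> bool) \<Rightarrow> nat \<Rightarrow> ('a \<Rightarrow> nat) \<Rightarrow> 'a \<Rightarrow> ('a \<Rightarrow> nat) set" where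
  "recol V E k c u = {c'. colouring V E k c' \<and> c' u \<noteq> c u \<and> (\<forall>x\<in>V. x \<noteq> u \<longrightarrow> c' x = c x)}"

end

theory Submission
  imports Defs
begin

text \<open>A recolouring of c at u is determined by its new colour at u, so
  |C_{c,u}| is one less than the number of colours missing from the neighbourhood
  of u. Recolouring a vertex u that is not adjacent to v leaves the neighbourhood
  of v untouched, hence |C_{c_u,v}| = |C_{c,v}|; this covers u = v as well, since
  a vertex is not its own neighbour.\<close>

definition free_colours :: "('a \<Rightarrow> 'a \<Rightarrow> bool) \<Rightarrow> nat \<Rightarrow> ('a \<Rightarrow> nat) \<Rightarrow> 'a \<Rightarrow> nat set" where
  "free_colours E k c u = {a \<in> {1..k}. \<forall>w. E u w \<longrightarrow> c w \<noteq> a}"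

lemma colouring_adjacent_neq: "colouring V E k c \<Longrightarrow> E x y \<Longrightarrow> c x \<noteq> c y"
  by (simp add: colouring_def)

lemma colouring_irrefl: "colouring V E k c \<Longrightarrow> \<not> E x x"
  by (auto simp: colouring_def)

lemma recol_eq_off:
  assumes "colouring V E k c" "d \<in> recol V E k c u" "w \<noteq> u"
  shows "d w = c w"
proof (cases "w \<in> V")
  case False
  then show ?thesis
    using assms(1,2) by (auto simp: recol_def colouring_def PiE_def extensional_def)
qed (use assms in \<open>auto simp: recol_def\<close>)

lemma colour_in_free_colours:
  assumes "colouring V E k c" "u \<in> V"
  shows "c u \<in> free_colours E k c u"
proof -
  have "c u \<in> {1..k}"
    using assms by (auto simp: colouring_def)
  moreover have "\<forall>w. E u w \<longrightarrow> c w \<noteq> c u"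
    using colouring_adjacent_neq[OF assms(1)] by metis
  ultimately show ?thesis
    by (simp add: free_colours_def)
qed

lemma recol_eq_image:
  assumes sym: "symp E" and col: "colouring V E k c" and "u \<in> V"
  shows "recol V E k c u = (\<lambda>a. c(u := a)) ` (free_colours E k c u - {c u})"
proof (intro equalityI subsetI)
  fix d assume d: "d \<in> recol V E k c u"
  then have "d = c(u := d u)"
    using recol_eq_off[OF col d] by auto
  moreover have "d u \<in> free_colours E k c u - {c u}"
  proof -
    have "d w \<noteq> d u" if "E u w" for w
      using d colouring_adjacent_neq[of V E k d u w] that by (simp add: recol_def)
    moreover have "d w = c w" if "E u w" for w
      using recol_eq_off[OF col d] colouring_irrefl[OF col] that by metis
    ultimately show ?thesis
      using d \<open>u \<in> V\<close> by (fastforce simp: recol_def colouring_def free_colours_def)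
  qed
  ultimately show "d \<in> (\<lambda>a. c(u := a)) ` (free_colours E k c u - {c u})"
    by blast
next
  fix d assume "d \<in> (\<lambda>a. c(u := a)) ` (free_colours E k c u - {c u})"
  then obtain a where a: "a \<in> free_colours E k c u" "a \<noteq> c u" and d: "d = c(u := a)"
    by blast
  have "E x y \<Longrightarrow> d x \<noteq> d y" for x y
    using col a sym colouring_irrefl[OF col, of x]
    by (auto simp: d colouring_def free_colours_def dest: sympD)
  moreover have "d \<in> V \<rightarrow>\<^sub>E {1..k}"
    using col a \<open>u \<in> V\<close> by (auto simp: d colouring_def free_colours_def PiE_def extensional_def)
  ultimately show "d \<in> recol V E k c u"
    using a by (auto simp: d recol_def colouring_def)
qed

lemma card_recol:
  assumes "symp E" "colouring V E k c" "u \<in> V"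
  shows "card (recol V E k c u) = card (free_colours E k c u) - 1"
proof -
  have "inj_on (\<lambda>a. c(u := a)) (free_colours E k c u - {c u})"
    by (rule inj_onI) (metis fun_upd_same)
  moreover have "finite (free_colours E k c u)"
    by (simp add: free_colours_def)
  ultimately show ?thesis
    using assms by (simp add: recol_eq_image card_image colour_in_free_colours)
qed

lemma card_recol_after_recol:
  assumes "symp E" "colouring V E k c" "u \<in> V" "v \<in> V" "\<not> E v u"
    and c': "c' \<in> recol V E k c u"
  shows "card (recol V E k c' v) = card (recol V E k c v)"
proof -
  have col': "colouring V E k c'"
    using c' by (simp add: recol_def)
  have "free_colours E k c' v = free_colours E k c v"
    using recol_eq_off[OF assms(2) c'] \<open>\<not> E v u\<close> unfolding free_colours_def by metis
  then show ?thesis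
    using assms col' by (simp add: card_recol)
qed

theorem lemma3p3:
  fixes V :: "'a set" and E :: "'a \<Rightarrow> 'a \<Rightarrow> bool" and k :: nat
    and c cu cv :: "'a \<Rightarrow> nat" and u v :: 'a
  assumes "fin_graph V E" and "k > 0" and "colouring V E k c"
    and "u \<in> V" and "v \<in> V"
    and "card (recol V E k c u) \<ge> 2" and "card (recol V E k c v) \<ge> 2"
    and "cu \<in> recol V E k c u" and "cv \<in> recol V E k c v"
    and "\<not> E u v"
  shows "card (recol V E k cu v) \<ge> 2 \<and> card (recol V E k cv u) \<ge> 2"
proof -
  have sym: "symp E"
    using assms(1) by (auto simp: fin_graph_def intro: sympI)
  have "\<not> E v u"
    using assms(10) sym by (blast dest: sympD)
  then have "card (recol V E k cu v) = card (recol V E k c v)"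
    using card_recol_after_recol[OF sym assms(3,4,5) _ assms(8)] by blast
  moreover have "card (recol V E k cv u) = card (recol V E k c u)"
    using card_recol_after_recol[OF sym assms(3,5,4,10,9)] .
  ultimately show ?thesis
    using assms(6,7) by simp
qed

end
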